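(* If a regular facets-pairing structure $\mathcal{F}$ on the cube $\mathcal{C}^n$ is perfect, then $\mathcal{F}$ is strong.
   Context: Let $[\pm n]=\{\pm1,\dots,\pm n\}$ and $\mathcal{C}^n=\{x\in\mathbb{R}^n: -\tfrac14\le x_i\le\tfrac14\}$. For $1\le i\le n$, $\mathbf{F}(i)$ and $\mathbf{F}(-i)$ denote the facets of $\mathcal{C}^n$ in $\{x_i=\tfrac14\}$ and $\{x_i=-\tfrac14\}$; for $j_1,\dots,j_s\in[\pm n]$ with distinct absolute values, $\mathbf{F}(j_1,\dots,j_s)=\bigcap_i\mathbf{F}(j_i)$ (every proper face has this form). A signed permutation is a bijection $\sigma$ of $[\pm n]$ with $\sigma(-k)=-\sigma(k)$. A facets-pairing structure on $\mathcal{C}^n$ is a pair $(\omega,\{\tau_j\})$ where $\omega$ is a bijection of $[\pm n]$ with $\omega\circ\omega=\mathrm{id}$ and $\tau_j:\mathbf{F}(j)\to\mathbf{F}(\omega(j))$ are face-preserving homeomorphisms with $\tau_{\omega(j)}=\tau_j^{-1}$, such that for all $|j|\ne|k|$, writing $\tau_j(\mathbf{F}(j,k))=\mathbf{F}(\omega(j),k')$ and $\tau_k(\mathbf{F}(j,k))=\mathbf{F}(j',\omega(k))$, one has $\tau_{k'}\tau_j(p)=\tau_{j'}\tau_k(p)$ for all $p\in\mathbf{F}(j,k)$. It is regular if each $\tau_j$ is a Euclidean isometry and $\omega$ is a signed permutation. A composition $\tau_{k_m}\circ\dots\circ\tau_{k_1}$ applied to a proper face $f$ is valid if $f\subset\mathbf{F}(k_1)$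 and $\tau_{k_i}\circ\dots\circ\tau_{k_1}(f)\subset\mathbf{F}(k_{i+1})$ for $1\le i<m$ ($m=0$ allowed, giving the identity). The face family $\widehat f$ is the set of faces $\tau_{k_m}\circ\dots\circ\tau_{k_1}(f)$ over all valid compositions. $\mathcal{F}$ is perfect if for every proper face $f$ of codimension $s$, $\widehat f$ has exactly $2^s$ elements. For a proper face $f$ let $\Xi(f)$ be the set of facets containing $f$. If $f\subset\mathbf{F}(k)$ and $f'=\tau_k(f)$, define the bijection $\Psi^f_k:\Xi(f)\to\Xi(f')$ by $\Psi^f_k(\mathbf{F}(k))=\mathbf{F}(\omega(k))$ and, for $F'\in\Xi(f)\setminus\{\mathbf{F}(k)\}$, $\Psi^f_k(F')$ is the facet $G$ with $G\cap\mathbf{F}(\omega(k))=\tau_k(F'\cap\mathbf{F}(k))$. $\mathcal{F}$ is strong if for every proper face $f$ and any two valid compositions $\tau_{k_m}\circ\dots\circ\tau_{k_1}$ and $\tau_{k'_r}\circ\dots\circ\tau_{k'_1}$ mapping $f$ onto the same face $\widetilde f$: (a) they agree at every point of $f$; and (b) the composites $\Psi^{f_m}_{k_m}\circ\dots\circ\Psi^{f_1}_{k_1}$ and $\Psi^{f'_r}_{k'_r}\circ\dots\circ\Psi^{f'_1}_{k'_1}$ coincide as maps $\Xi(f)\to\Xi(\widetilde f)$, where $f_1=f'_1=f$, $f_{i+1}=\tau_{k_i}\circ\dots\circ\tau_{k_1}(f)$, $f'_{i+1}=\tau_{k'_i}\circ\dots\circ\tau_{k'_1}(f)$. *)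

theory Defs
  imports "HOL-Analysis.Analysis"
begin

text \<open>The cube C^n lives in real^'n, n = CARD('n). A signed index in [+-n] is a pair
 (i, b) :: 'n \<times> bool, standing for +i if b = True and for -i if b = False.\<close>

type_synonym 'n sidx = "'n \<times> bool"

definition sneg :: "'n sidx \<Rightarrow> 'n sidx" where
  "sneg j = (fst j, \<not> snd j)"

definition cube :: "(real^'n) set" where
  "cube = {x. \<forall>i. - (1/4) \<le> x$i \<and> x$i \<le> 1/4}"

definition facet :: "'n sidx \<Rightarrow> (real^'n) set" where
  "facet j = {x \<in> cube. x $ fst j = (if snd j then 1/4 else - (1/4))}"

definition distinct_abs :: "'n sidx set \<Rightarrow> bool" where
  "distinct_abs S \<longleftrightarrow> (\<forall>j\<in>S. \<forall>k\<in>S. fst j = fst k \<longrightarrow> j = k)"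

definition face :: "'n sidx set \<Rightarrow> (real^'n) set" where
  "face S = cube \<inter> \<Inter> (facet ` S)"

definition proper_face :: "(real^'n) set \<Rightarrow> bool" where
  "proper_face f \<longleftrightarrow> (\<exists>S. S \<noteq> {} \<and> distinct_abs S \<and> f = face S)"

definition Xi :: "(real^'n) set \<Rightarrow> (real^'n) set set" where
  "Xi f = {F \<in> range facet. f \<subseteq> F}"

definition codim :: "(real^'n) set \<Rightarrow> nat" where
  "codim f = card {j. f \<subseteq> facet j}"

definition face_preserving :: "'n sidx \<Rightarrow> (real^'n \<Rightarrow> real^'n) \<Rightarrow> bool" where
  "face_preserving j t \<longleftrightarrow>
     (\<forall>f. proper_face f \<and> f \<subseteq> facet j \<longrightarrow> proper_face (t ` f))"

definition facets_pairing ::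
  "('n sidx \<Rightarrow> 'n sidx) \<Rightarrow> ('n sidx \<Rightarrow> real^'n \<Rightarrow> real^'n) \<Rightarrow> bool" where
  "facets_pairing \<omega> \<tau> \<longleftrightarrow>
     bij \<omega> \<and> (\<forall>j. \<omega> (\<omega> j) = j) \<and>
     (\<forall>j. homeomorphism (facet j) (facet (\<omega> j)) (\<tau> j) (\<tau> (\<omega> j))
          \<and> face_preserving j (\<tau> j)) \<and>
     (\<forall>j k j' k'. fst j \<noteq> fst k \<longrightarrow> fst k' \<noteq> fst (\<omega> j) \<longrightarrow> fst j' \<noteq> fst (\<omega> k) \<longrightarrow>
        \<tau> j ` (facet j \<inter> facet k) = facet (\<omega> j) \<inter> facet k' \<longrightarrow>
        \<tau> k ` (facet j \<inter> facet k) = facet j' \<inter> facet (\<omega> k) \<longrightarrow>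
        (\<forall>p \<in> facet j \<inter> facet k. \<tau> k' (\<tau> j p) = \<tau> j' (\<tau> k p)))"

definition regular_fp ::
  "('n sidx \<Rightarrow> 'n sidx) \<Rightarrow> ('n sidx \<Rightarrow> real^'n \<Rightarrow> real^'n) \<Rightarrow> bool" where
  "regular_fp \<omega> \<tau> \<longleftrightarrow> facets_pairing \<omega> \<tau> \<and>
     (\<forall>j. \<forall>x\<in>facet j. \<forall>y\<in>facet j. dist (\<tau> j x) (\<tau> j y) = dist x y) \<and>
     (\<forall>j. \<omega> (sneg j) = sneg (\<omega> j))"

text \<open>Compositions tau_{k_m} o ... o tau_{k_1}, given by the list [k_1, ..., k_m].\<close>
fun comp_seq :: "('n sidx \<Rightarrow> real^'n \<Rightarrow> real^'n) \<Rightarrow> 'n sidx list \<Rightarrow> real^'n \<Rightarrow> real^'n" where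
  "comp_seq \<tau> [] = id"
| "comp_seq \<tau> (k # ks) = comp_seq \<tau> ks \<circ> \<tau> k"

fun valid_seq :: "('n sidx \<Rightarrow> real^'n \<Rightarrow> real^'n) \<Rightarrow> (real^'n) set \<Rightarrow> 'n sidx list \<Rightarrow> bool" where
  "valid_seq \<tau> f [] = True"
| "valid_seq \<tau> f (k # ks) = (f \<subseteq> facet k \<and> valid_seq \<tau> (\<tau> k ` f) ks)"

definition face_family ::
  "('n sidx \<Rightarrow> real^'n \<Rightarrow> real^'n) \<Rightarrow> (real^'n) set \<Rightarrow> (real^'n) set set" where
  "face_family \<tau> f = {comp_seq \<tau> ks ` f | ks. valid_seq \<tau> f ks}"

definition perfect :: "('n sidx \<Rightarrow> real^'n \<Rightarrow> real^'n) \<Rightarrow> bool" where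
  "perfect \<tau> \<longleftrightarrow> (\<forall>f. proper_face f \<longrightarrow> card (face_family \<tau> f) = 2 ^ codim f)"

text \<open>Psi^f_k on facets containing f (the dependence on f is only through the domain Xi(f)).\<close>
definition Psi ::
  "('n sidx \<Rightarrow> 'n sidx) \<Rightarrow> ('n sidx \<Rightarrow> real^'n \<Rightarrow> real^'n) \<Rightarrow> 'n sidx
     \<Rightarrow> (real^'n) set \<Rightarrow> (real^'n) set" where
  "Psi \<omega> \<tau> k F' = (if F' = facet k then facet (\<omega> k)
      else (THE G. G \<in> range facet \<and> G \<inter> facet (\<omega> k) = \<tau> k ` (F' \<inter> facet k)))"

fun Psi_seq ::
  "('n sidx \<Rightarrow> 'n sidx) \<Rightarrow> ('n sidx \<Rightarrow> real^'n \<Rightarrow> real^'n) \<Rightarrow> 'n sidx list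
     \<Rightarrow> (real^'n) set \<Rightarrow> (real^'n) set" where
  "Psi_seq \<omega> \<tau> [] = id"
| "Psi_seq \<omega> \<tau> (k # ks) = Psi_seq \<omega> \<tau> ks \<circ> Psi \<omega> \<tau> k"

definition strong ::
  "('n sidx \<Rightarrow> 'n sidx) \<Rightarrow> ('n sidx \<Rightarrow> real^'n \<Rightarrow> real^'n) \<Rightarrow> bool" where
  "strong \<omega> \<tau> \<longleftrightarrow>
     (\<forall>f ks ks'. proper_face f \<and> valid_seq \<tau> f ks \<and> valid_seq \<tau> f ks' \<and>
        comp_seq \<tau> ks ` f = comp_seq \<tau> ks' ` f \<longrightarrow>
        (\<forall>p\<in>f. comp_seq \<tau> ks p = comp_seq \<tau> ks' p) \<and>
        (\<forall>F\<in>Xi f. Psi_seq \<omega> \<tau> ks F = Psi_seq \<omega> \<tau> ks' F))"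

end

theory Submission
  imports Defs
begin

text \<open>
  Crossing the same facet twice cancels and crossings of distinct facets commute,
  so every valid word has the same action (on the points of f and on Xi(f)) as a canonical
  word crossing each facet of a subset P of Xi(f) once.  The canonical end faces exhaust the
  face family; perfectness says it has 2^s = |Pow Xi(f)| elements, so P is determined by the
  end face.  Hence two valid words with the same end face have the same action: strongness.
\<close>

subsection \<open>Proper faces of the cube as index sets\<close>

definition face_centre :: "'n::finite sidx set \<Rightarrow> real^'n" where
  "face_centre S = (\<chi> i. if (i, True) \<in> S then 1/4 else if (i, False) \<in> S then - (1/4) else 0)"

lemma face_centre_in_face:
  assumes "distinct_abs S" shows "face_centre S \<in> face S"
proof -
  have in_cube: "face_centre S \<in> cube" unfolding cube_def face_centre_def by auto
  have "face_centre S \<in> facet s" if "s \<in> S" for s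
  proof (cases s)
    case (Pair i b)
    then have "b = False \<Longrightarrow> (i, True) \<notin> S"
      using assms that unfolding distinct_abs_def by fastforce
    then show ?thesis using in_cube that Pair unfolding facet_def face_centre_def
      by (cases b) auto
  qed
  then show ?thesis using in_cube unfolding face_def by auto
qed

lemma face_subset_imp:
  assumes "distinct_abs S" "face S \<subseteq> face T" shows "T \<subseteq> S"
proof
  fix t assume "t \<in> T"
  then have "face_centre S \<in> facet t"
    using face_centre_in_face[OF assms(1)] assms(2) unfolding face_def by auto
  then show "t \<in> S"
    unfolding facet_def face_centre_def by (cases t) (auto split: if_splits)
qed

lemma face_inject: "distinct_abs S \<Longrightarrow> distinct_abs T \<Longrightarrow> face S = face T \<Longrightarrow> S = T"
  using face_subset_imp by blast

lemma face_nonempty: "distinct_abs S \<Longrightarrow> face S \<noteq> {}"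
  using face_centre_in_face by blast

lemma face_nonempty_distinct_abs:
  assumes "face S \<noteq> {}" shows "distinct_abs S"
  unfolding distinct_abs_def
proof (intro ballI impI)
  fix j k assume "j \<in> S" "k \<in> S" "fst j = fst k"
  moreover obtain x where "x \<in> face S" using assms by blast
  ultimately have "x \<in> facet j" "x \<in> facet k" unfolding face_def by auto
  then have "x $ fst j = (if snd j then 1/4 else - (1/4))"
    "x $ fst j = (if snd k then 1/4 else - (1/4))"
    using \<open>fst j = fst k\<close> unfolding facet_def by auto
  then show "j = k" using \<open>fst j = fst k\<close> by (auto simp: prod_eq_iff split: if_splits)
qed

lemma face_single [simp]: "face {j} = facet j"
  unfolding face_def facet_def by auto

lemma face_pair: "face {a, b} = facet a \<inter> facet b"
  unfolding face_def facet_def by auto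

lemma distinct_abs_single [simp]: "distinct_abs {j}"
  unfolding distinct_abs_def by auto

lemma distinct_abs_pair: "fst a \<noteq> fst b \<Longrightarrow> distinct_abs {a, b}"
  unfolding distinct_abs_def by auto

lemma distinct_abs_subset: "distinct_abs S \<Longrightarrow> T \<subseteq> S \<Longrightarrow> distinct_abs T"
  unfolding distinct_abs_def by blast

lemma inj_facet: "inj facet"
proof (rule injI)
  fix j k :: "'n::finite sidx" assume "facet j = facet k"
  then show "j = k" using face_inject[of "{j}" "{k}"] by simp
qed

lemma face_subset_facet_iff: "distinct_abs S \<Longrightarrow> face S \<subseteq> facet j \<longleftrightarrow> j \<in> S"
  using face_subset_imp[of S "{j}"] unfolding face_def by auto

lemma Xi_face: "distinct_abs S \<Longrightarrow> Xi (face S) = facet ` S"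
  unfolding Xi_def using face_subset_facet_iff by blast

lemma codim_face: "distinct_abs S \<Longrightarrow> codim (face S) = card S"
proof -
  assume "distinct_abs S"
  then have "{j. face S \<subseteq> facet j} = S" using face_subset_facet_iff by blast
  then show ?thesis unfolding codim_def by simp
qed

lemma facet_pair_inject:
  assumes "fst a \<noteq> fst c" "fst b \<noteq> fst c" "facet c \<inter> facet a = facet c \<inter> facet b"
  shows "a = b"
proof -
  have "{c, a} = {c, b}"
    using assms by (intro face_inject) (auto simp: face_pair intro: distinct_abs_pair)
  then show ?thesis using assms(1) by (metis doubleton_eq_iff)
qed

lemma facet_pair_neq_facet: "fst m \<noteq> fst k \<Longrightarrow> facet k \<inter> facet m \<noteq> facet k"
  using face_inject[of "{k, m}" "{k}"] by (auto simp: face_pair distinct_abs_pair)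

lemma proper_faceE:
  assumes "proper_face g" obtains S where "distinct_abs S" "S \<noteq> {}" "g = face S"
  using assms unfolding proper_face_def by blast

lemma proper_face_face: "distinct_abs S \<Longrightarrow> S \<noteq> {} \<Longrightarrow> proper_face (face S)"
  unfolding proper_face_def by blast

lemma face_antimono: "T \<subseteq> S \<Longrightarrow> face S \<subseteq> face T"
  unfolding face_def by auto

lemma face_as_INT: "k \<in> S \<Longrightarrow> face S = (\<Inter>m\<in>S. facet k \<inter> facet m)"
  unfolding face_def facet_def by auto

definition companions :: "'n sidx \<Rightarrow> 'n sidx set" where
  "companions k = {m. m = k \<or> fst m \<noteq> fst k}"

lemma self_in_companions [simp]: "k \<in> companions k"
  unfolding companions_def by simp

lemma distinct_abs_subset_companions: "distinct_abs S \<Longrightarrow> k \<in> S \<Longrightarrow> S \<subseteq> companions k"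
  unfolding distinct_abs_def companions_def by blast

subsection \<open>Facets-pairing structures acting on index sets\<close>

locale pairing =
  fixes \<omega> :: "'n::finite sidx \<Rightarrow> 'n sidx" and \<tau> :: "'n sidx \<Rightarrow> real^'n \<Rightarrow> real^'n"
  assumes facets_pairing: "facets_pairing \<omega> \<tau>"
begin

lemma omega_omega [simp]: "\<omega> (\<omega> j) = j"
  using facets_pairing unfolding facets_pairing_def by blast

lemma tau_homeomorphism: "homeomorphism (facet k) (facet (\<omega> k)) (\<tau> k) (\<tau> (\<omega> k))"
  using facets_pairing unfolding facets_pairing_def by blast

lemma tau_face_preserving: "proper_face g \<Longrightarrow> g \<subseteq> facet k \<Longrightarrow> proper_face (\<tau> k ` g)"
  using facets_pairing unfolding facets_pairing_def face_preserving_def by blast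

lemma tau_compatible:
  "fst j \<noteq> fst k \<Longrightarrow> fst k' \<noteq> fst (\<omega> j) \<Longrightarrow> fst j' \<noteq> fst (\<omega> k) \<Longrightarrow>
   \<tau> j ` (facet j \<inter> facet k) = facet (\<omega> j) \<inter> facet k' \<Longrightarrow>
   \<tau> k ` (facet j \<inter> facet k) = facet j' \<inter> facet (\<omega> k) \<Longrightarrow>
   p \<in> facet j \<inter> facet k \<Longrightarrow> \<tau> k' (\<tau> j p) = \<tau> j' (\<tau> k p)"
  using facets_pairing unfolding facets_pairing_def by blast

lemma tau_maps_to: "p \<in> facet k \<Longrightarrow> \<tau> k p \<in> facet (\<omega> k)"
  using tau_homeomorphism[of k] unfolding homeomorphism_def by blast

lemma tau_inverse: "p \<in> facet k \<Longrightarrow> \<tau> (\<omega> k) (\<tau> k p) = p"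
  using tau_homeomorphism[of k] unfolding homeomorphism_def by blast

lemma tau_image_facet: "\<tau> k ` facet k = facet (\<omega> k)"
  using tau_homeomorphism[of k] unfolding homeomorphism_def by blast

lemma inj_on_tau: "inj_on (\<tau> k) (facet k)"
  by (metis inj_on_inverseI tau_inverse)

lemma tau_inverse_image: "g \<subseteq> facet k \<Longrightarrow> \<tau> (\<omega> k) ` \<tau> k ` g = g"
  by (force simp: image_image tau_inverse)

lemma tau_image_inject: "g \<subseteq> facet k \<Longrightarrow> h \<subseteq> facet k \<Longrightarrow> \<tau> k ` g = \<tau> k ` h \<Longrightarrow> g = h"
  by (metis tau_inverse_image)

lemma tau_image_faceE:
  assumes "distinct_abs S" "k \<in> S"
  obtains S' where "distinct_abs S'" "\<omega> k \<in> S'" "\<tau> k ` face S = face S'"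
proof -
  have sub: "face S \<subseteq> facet k" using assms face_subset_facet_iff by blast
  have "S \<noteq> {}" using assms(2) by blast
  then have "proper_face (\<tau> k ` face S)"
    using tau_face_preserving[OF proper_face_face[OF assms(1)] sub] by blast
  then obtain S' where S': "distinct_abs S'" "S' \<noteq> {}" "\<tau> k ` face S = face S'"
    by (rule proper_faceE)
  have "face S' \<subseteq> facet (\<omega> k)" unfolding S'(3)[symmetric] using sub tau_maps_to by blast
  then have "\<omega> k \<in> S'" using face_subset_facet_iff[OF S'(1)] by blast
  then show ?thesis by (rule that[OF S'(1) _ S'(3)])
qed

lemma tau_image_facet_pair_neq:
  assumes "fst m \<noteq> fst k" shows "\<tau> k ` (facet k \<inter> facet m) \<noteq> facet (\<omega> k)"
proof
  assume "\<tau> k ` (facet k \<inter> facet m) = facet (\<omega> k)"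
  then have "\<tau> k ` (facet k \<inter> facet m) = \<tau> k ` facet k" by (simp add: tau_image_facet)
  then have "facet k \<inter> facet m = facet k" using tau_image_inject[of "facet k \<inter> facet m" k] by blast
  then show False using facet_pair_neq_facet[OF assms] by blast
qed

text \<open>The codimension-two faces of F(k) are carried to codimension-two faces of F(\<omega> k):
  the image is a face F(S') with \<omega> k in S'; for a second index m' of S', applying
  \<tau> (\<omega> k) to F(\<omega> k, m') returns a face between F(k, m) and F(k), hence F(k, m).\<close>
lemma tau_facet_pair:
  assumes mk: "fst m \<noteq> fst k"
  shows "\<exists>m'. fst m' \<noteq> fst (\<omega> k) \<and> \<tau> k ` (facet k \<inter> facet m) = facet (\<omega> k) \<inter> facet m'"
proof -
  define g where "g = facet k \<inter> facet m"
  have dg: "distinct_abs {k, m}" using mk by (simp add: distinct_abs_pair)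
  have gk: "g \<subseteq> facet k" unfolding g_def by blast
  obtain S' where S': "distinct_abs S'" "\<omega> k \<in> S'" "\<tau> k ` g = face S'"
    using tau_image_faceE[OF dg, of k] unfolding g_def face_pair by auto
  have "S' \<noteq> {\<omega> k}" using S'(3) tau_image_facet_pair_neq[OF mk] unfolding g_def by auto
  then obtain m' where m': "m' \<in> S'" "m' \<noteq> \<omega> k" using S'(2) by blast
  then have fm': "fst m' \<noteq> fst (\<omega> k)" using S'(1,2) unfolding distinct_abs_def by blast
  define h where "h = facet (\<omega> k) \<inter> facet m'"
  have dh: "distinct_abs {\<omega> k, m'}" using fm' by (simp add: distinct_abs_pair)
  have hk: "h \<subseteq> facet (\<omega> k)" unfolding h_def by blast
  have gh: "\<tau> k ` g \<subseteq> h"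
    using S'(3) face_antimono[of "{\<omega> k, m'}" S'] m'(1) S'(2) unfolding h_def face_pair by simp
  obtain T where T: "distinct_abs T" "k \<in> T" "\<tau> (\<omega> k) ` h = face T"
    using tau_image_faceE[OF dh, of "\<omega> k"] unfolding h_def face_pair by auto
  have "g \<subseteq> face T"
    using image_mono[OF gh, of "\<tau> (\<omega> k)"] T(3) tau_inverse_image[OF gk] by simp
  then have "T \<subseteq> {k, m}" using face_subset_imp[OF dg] unfolding g_def face_pair by blast
  moreover have "T \<noteq> {k}"
    using T(3) tau_image_facet_pair_neq[OF fm'] unfolding h_def by auto
  ultimately have "T = {k, m}" using T(2) by blast
  then have "\<tau> (\<omega> k) ` h = \<tau> (\<omega> k) ` \<tau> k ` g"
    using T(3) tau_inverse_image[OF gk] unfolding g_def by (simp add: face_pair)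
  moreover have "\<tau> k ` g \<subseteq> facet (\<omega> k)" using gk tau_maps_to by blast
  ultimately have "h = \<tau> k ` g" using hk tau_image_inject[of h "\<omega> k" "\<tau> k ` g"] by simp
  then have "\<tau> k ` (facet k \<inter> facet m) = facet (\<omega> k) \<inter> facet m'"
    unfolding g_def h_def by simp
  with fm' show ?thesis by blast
qed

definition psi :: "'n sidx \<Rightarrow> 'n sidx \<Rightarrow> 'n sidx" where
  "psi k m = (if m = k then \<omega> k else
     (SOME m'. fst m' \<noteq> fst (\<omega> k) \<and> \<tau> k ` (facet k \<inter> facet m) = facet (\<omega> k) \<inter> facet m'))"

lemma psi_self [simp]: "psi k k = \<omega> k"
  unfolding psi_def by simp

lemma psi_in_companions: "m \<in> companions k \<Longrightarrow> psi k m \<in> companions (\<omega> k)"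
  and tau_image_facet_pair:
    "m \<in> companions k \<Longrightarrow> \<tau> k ` (facet k \<inter> facet m) = facet (\<omega> k) \<inter> facet (psi k m)"
proof -
  assume m: "m \<in> companions k"
  have "psi k m \<in> companions (\<omega> k) \<and>
        \<tau> k ` (facet k \<inter> facet m) = facet (\<omega> k) \<inter> facet (psi k m)"
  proof (cases "m = k")
    case True then show ?thesis by (simp add: tau_image_facet)
  next
    case False
    then have "fst m \<noteq> fst k" using m unfolding companions_def by simp
    from someI_ex[OF tau_facet_pair[OF this]] False show ?thesis
      unfolding psi_def companions_def by simp
  qed
  then show "psi k m \<in> companions (\<omega> k)"
    "\<tau> k ` (facet k \<inter> facet m) = facet (\<omega> k) \<inter> facet (psi k m)" by blast+
qed

text \<open>psi (\<omega> k) undoes psi k, as \<tau> (\<omega> k) undoes \<tau> k.\<close>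
lemma psi_psi:
  assumes m: "m \<in> companions k" shows "psi (\<omega> k) (psi k m) = m"
proof (cases "m = k")
  case False
  have m': "psi k m \<in> companions (\<omega> k)" by (rule psi_in_companions[OF m])
  have "facet k \<inter> facet (psi (\<omega> k) (psi k m)) = \<tau> (\<omega> k) ` \<tau> k ` (facet k \<inter> facet m)"
    using tau_image_facet_pair[OF m'] tau_image_facet_pair[OF m] by simp
  also have "\<dots> = facet k \<inter> facet m" by (rule tau_inverse_image) blast
  finally have eq: "facet k \<inter> facet (psi (\<omega> k) (psi k m)) = facet k \<inter> facet m" .
  have fm: "fst m \<noteq> fst k" using False m unfolding companions_def by simp
  have "psi (\<omega> k) (psi k m) \<noteq> k"
  proof
    assume "psi (\<omega> k) (psi k m) = k"
    then have "facet k \<inter> facet m = facet k" using eq by simp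
    then show False using facet_pair_neq_facet[OF fm] by blast
  qed
  then have "fst (psi (\<omega> k) (psi k m)) \<noteq> fst k"
    using psi_in_companions[OF m'] unfolding companions_def by simp
  then show ?thesis using facet_pair_inject[OF _ fm eq] by blast
qed simp

lemma inj_on_psi: "inj_on (psi k) (companions k)"
  by (rule inj_on_inverseI[where g = "psi (\<omega> k)"]) (rule psi_psi)

lemma psi_fst_neq:
  assumes m: "m \<in> companions k" and "m \<noteq> k" shows "fst (psi k m) \<noteq> fst (\<omega> k)"
proof -
  have "psi k m \<noteq> psi k k"
    using assms inj_on_psi[of k] self_in_companions[of k] unfolding inj_on_def by blast
  then show ?thesis using psi_in_companions[OF m] unfolding companions_def by simp
qed

lemma tau_image_face:
  assumes S: "distinct_abs S" and kS: "k \<in> S"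
  shows "\<tau> k ` face S = face (psi k ` S)" and "distinct_abs (psi k ` S)"
proof -
  have SC: "S \<subseteq> companions k" by (rule distinct_abs_subset_companions[OF S kS])
  have sub: "\<forall>m\<in>S. facet k \<inter> facet m \<subseteq> facet k" by blast
  have "\<tau> k ` face S = (\<Inter>m\<in>S. \<tau> k ` (facet k \<inter> facet m))"
    using image_INT[OF inj_on_tau[of k] sub kS] face_as_INT[OF kS] by simp
  also have "\<dots> = (\<Inter>m\<in>S. facet (\<omega> k) \<inter> facet (psi k m))"
  proof (rule INF_cong[OF refl])
    fix m assume "m \<in> S"
    then show "\<tau> k ` (facet k \<inter> facet m) = facet (\<omega> k) \<inter> facet (psi k m)"
      using SC by (intro tau_image_facet_pair) blast
  qed
  also have "\<dots> = face (psi k ` S)"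
  proof -
    have "\<omega> k \<in> psi k ` S" using kS psi_self by (metis image_eqI)
    then show ?thesis using face_as_INT[of "\<omega> k" "psi k ` S"] by (simp add: image_image)
  qed
  finally show face: "\<tau> k ` face S = face (psi k ` S)" .
  show "distinct_abs (psi k ` S)"
    using face_nonempty[OF S] face by (intro face_nonempty_distinct_abs) auto
qed

lemma Psi_facet:
  assumes m: "m \<in> companions k" shows "Psi \<omega> \<tau> k (facet m) = facet (psi k m)"
proof (cases "m = k")
  case False
  have fm': "fst (psi k m) \<noteq> fst (\<omega> k)" by (rule psi_fst_neq[OF m False])
  have "(THE G. G \<in> range facet \<and> G \<inter> facet (\<omega> k) = \<tau> k ` (facet m \<inter> facet k))
        = facet (psi k m)"
  proof (rule the_equality)
    show "facet (psi k m) \<in> range facet \<and>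
          facet (psi k m) \<inter> facet (\<omega> k) = \<tau> k ` (facet m \<inter> facet k)"
      using tau_image_facet_pair[OF m] by (simp add: Int_commute)
  next
    fix G assume G: "G \<in> range facet \<and> G \<inter> facet (\<omega> k) = \<tau> k ` (facet m \<inter> facet k)"
    then obtain g where g: "G = facet g" by blast
    have eq: "facet (\<omega> k) \<inter> facet g = facet (\<omega> k) \<inter> facet (psi k m)"
      using G g tau_image_facet_pair[OF m] by (simp add: Int_commute)
    moreover have "fst g \<noteq> fst (\<omega> k)"
    proof
      assume g_opp: "fst g = fst (\<omega> k)"
      have "face {\<omega> k, g} \<noteq> {}"
        using eq face_nonempty[OF distinct_abs_pair[OF fm'[symmetric]]] by (simp add: face_pair)
      then have "g = \<omega> k"
        using face_nonempty_distinct_abs g_opp unfolding distinct_abs_def by blast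
      then have "facet (\<omega> k) \<inter> facet (psi k m) = facet (\<omega> k)" using eq by simp
      then show False using facet_pair_neq_facet[OF fm'] by blast
    qed
    ultimately show "G = facet (psi k m)" using g fm' facet_pair_inject by metis
  qed
  then show ?thesis using False inj_facet unfolding Psi_def by (auto dest: injD)
qed (simp add: Psi_def)

subsection \<open>Local behaviour at a proper face\<close>

lemma facets_through_face_fst:
  assumes "proper_face g" "g \<subseteq> facet j" "g \<subseteq> facet k" "j \<noteq> k"
  shows "fst j \<noteq> fst k"
proof -
  obtain S where S: "distinct_abs S" "S \<noteq> {}" "g = face S" using assms(1) by (rule proper_faceE)
  then have "j \<in> S" "k \<in> S" using assms(2,3) face_subset_facet_iff by blast+
  then show ?thesis using S(1) assms(4) unfolding distinct_abs_def by blast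
qed

lemma Psi_bij_Xi:
  assumes g: "proper_face g" and gk: "g \<subseteq> facet k"
  shows "bij_betw (Psi \<omega> \<tau> k) (Xi g) (Xi (\<tau> k ` g))"
proof -
  obtain S where S: "distinct_abs S" "S \<noteq> {}" "g = face S" using g by (rule proper_faceE)
  have kS: "k \<in> S" using gk S face_subset_facet_iff by blast
  have SC: "S \<subseteq> companions k" by (rule distinct_abs_subset_companions[OF S(1) kS])
  have Psi_S: "Psi \<omega> \<tau> k (facet m) = facet (psi k m)" if "m \<in> S" for m
    using SC that by (intro Psi_facet) blast
  have "inj_on (facet \<circ> psi k) S"
    by (rule comp_inj_on[OF inj_on_subset[OF inj_on_psi SC] inj_on_subset[OF inj_facet subset_UNIV]])
  moreover have "inj_on (Psi \<omega> \<tau> k \<circ> facet) S \<longleftrightarrow> inj_on (facet \<circ> psi k) S"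
    by (rule inj_on_cong) (simp add: Psi_S)
  ultimately have "inj_on (Psi \<omega> \<tau> k \<circ> facet) S" by blast
  then have "inj_on (Psi \<omega> \<tau> k) (facet ` S)" by (rule inj_on_imageI)
  moreover have "Psi \<omega> \<tau> k ` facet ` S = facet ` psi k ` S"
    unfolding image_image using Psi_S by (intro image_cong) auto
  moreover have "Xi g = facet ` S" "Xi (\<tau> k ` g) = facet ` psi k ` S"
    using Xi_face tau_image_face[OF S(1) kS] S by simp_all
  ultimately show ?thesis by (simp add: bij_betw_imageI)
qed

lemma Psi_cancel:
  assumes g: "proper_face g" and gk: "g \<subseteq> facet k" and F: "F \<in> Xi g"
  shows "Psi \<omega> \<tau> (\<omega> k) (Psi \<omega> \<tau> k F) = F"
proof -
  obtain S where S: "distinct_abs S" "S \<noteq> {}" "g = face S" using g by (rule proper_faceE)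
  have kS: "k \<in> S" using gk S face_subset_facet_iff by blast
  obtain m where m: "F = facet m" "m \<in> S" using F S Xi_face by blast
  have mC: "m \<in> companions k" using distinct_abs_subset_companions[OF S(1) kS] m(2) by blast
  show ?thesis
    using m(1) Psi_facet[OF mC] Psi_facet[OF psi_in_companions[OF mC]] psi_psi[OF mC] by simp
qed

lemma tau_square:
  assumes jk: "fst j \<noteq> fst k" and p: "p \<in> facet j \<inter> facet k"
  shows "\<tau> (psi j k) (\<tau> j p) = \<tau> (psi k j) (\<tau> k p)"
proof -
  have kj: "k \<in> companions j" "j \<in> companions k" "k \<noteq> j" "j \<noteq> k"
    using jk unfolding companions_def by auto
  show ?thesis
  proof (rule tau_compatible[OF jk psi_fst_neq[OF kj(1,3)] psi_fst_neq[OF kj(2,4)] _ _ p])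
    show "\<tau> j ` (facet j \<inter> facet k) = facet (\<omega> j) \<inter> facet (psi j k)"
      by (rule tau_image_facet_pair[OF kj(1)])
    show "\<tau> k ` (facet j \<inter> facet k) = facet (psi k j) \<inter> facet (\<omega> k)"
      using tau_image_facet_pair[OF kj(2)] by (simp add: Int_commute)
  qed
qed

lemma psi_square_image:
  assumes T: "distinct_abs T" and jT: "j \<in> T" and kT: "k \<in> T" and jk: "j \<noteq> k"
  shows "psi (psi j k) ` psi j ` T = psi (psi k j) ` psi k ` T"
proof -
  have fjk: "fst j \<noteq> fst k" using T jT kT jk unfolding distinct_abs_def by blast
  note Tj = tau_image_face[OF T jT] and Tk = tau_image_face[OF T kT]
  note Tjk = tau_image_face[OF Tj(2) imageI[OF kT]]
  note Tkj = tau_image_face[OF Tk(2) imageI[OF jT]]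
  have "face T \<subseteq> facet j \<inter> facet k" using jT kT unfolding face_def by blast
  then have "\<tau> (psi j k) ` \<tau> j ` face T = \<tau> (psi k j) ` \<tau> k ` face T"
    using tau_square[OF fjk] by (force simp: image_image cong: image_cong)
  then have "face (psi (psi j k) ` psi j ` T) = face (psi (psi k j) ` psi k ` T)"
    using Tj(1) Tk(1) Tjk(1) Tkj(1) by simp
  then show ?thesis by (rule face_inject[OF Tjk(2) Tkj(2)])
qed

lemma inj_on_psi_psi:
  assumes S: "distinct_abs S" and jS: "j \<in> S" and kS: "k \<in> S"
  shows "inj_on (psi (psi j k) \<circ> psi j) S"
proof (rule comp_inj_on)
  show "inj_on (psi j) S" using inj_on_subset[OF inj_on_psi distinct_abs_subset_companions[OF S jS]] .
  show "inj_on (psi (psi j k)) (psi j ` S)"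
    using inj_on_subset[OF inj_on_psi distinct_abs_subset_companions[OF tau_image_face(2)[OF S jS]]]
      kS by blast
qed

text \<open>Both ways around the
  square permute the pair {j, k} alike; if they crossed, the partner indices psi j k and
  psi k j would coincide and psi of it would identify \<omega> j with \<omega> k.\<close>
lemma psi_square_self:
  assumes S: "distinct_abs S" and jS: "j \<in> S" and kS: "k \<in> S" and jk: "j \<noteq> k"
  shows "psi (psi j k) (psi j j) = psi (psi k j) (psi k j)"
proof (rule ccontr)
  define \<alpha> where "\<alpha> = psi (psi j k) \<circ> psi j"
  define \<beta> where "\<beta> = psi (psi k j) \<circ> psi k"
  assume "\<not> ?thesis"
  then have "\<alpha> j \<noteq> \<beta> j" unfolding \<alpha>_def \<beta>_def by simp
  moreover have "\<alpha> ` {j, k} = \<beta> ` {j, k}"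
    using psi_square_image[of "{j, k}" j k] jS kS jk S
    unfolding \<alpha>_def \<beta>_def by (simp add: image_comp distinct_abs_subset)
  moreover have "\<alpha> j \<noteq> \<alpha> k"
    using inj_on_psi_psi[OF S jS kS] jS kS jk unfolding \<alpha>_def inj_on_def by blast
  ultimately have crossed: "\<alpha> j = \<beta> k" "\<alpha> k = \<beta> j" by (auto simp: doubleton_eq_iff)
  have "\<omega> (psi j k) = \<omega> (psi k j)" using crossed(2) unfolding \<alpha>_def \<beta>_def by simp
  then have same: "psi j k = psi k j" by (metis omega_omega)
  have "\<omega> j \<in> companions (psi j k)" "\<omega> k \<in> companions (psi j k)"
    using distinct_abs_subset_companions[OF tau_image_face(2)[OF S jS], of "psi j k"]
      distinct_abs_subset_companions[OF tau_image_face(2)[OF S kS], of "psi k j"]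
      jS kS same by (metis image_eqI psi_self subsetD)+
  moreover have "psi (psi j k) (\<omega> j) = psi (psi j k) (\<omega> k)"
    using crossed(1) same unfolding \<alpha>_def \<beta>_def by simp
  ultimately have "\<omega> j = \<omega> k" using inj_on_psi unfolding inj_on_def by blast
  then show False using jk by (metis omega_omega)
qed

text \<open>The commuting square at the index level: both ways around it transform every index of
  the face in the same way.  For a third index m this follows by comparing the images of
  {j, k, m} and {j, k}.\<close>
lemma psi_square:
  assumes S: "distinct_abs S" and jS: "j \<in> S" and kS: "k \<in> S" and jk: "j \<noteq> k" and mS: "m \<in> S"
  shows "psi (psi j k) (psi j m) = psi (psi k j) (psi k m)"
proof -
  define \<alpha> where "\<alpha> = psi (psi j k) \<circ> psi j"
  define \<beta> where "\<beta> = psi (psi k j) \<circ> psi k"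
  have pair: "\<alpha> j = \<beta> j" "\<alpha> k = \<beta> k"
    using psi_square_self[OF S jS kS jk] psi_square_self[OF S kS jS jk[symmetric]]
    unfolding \<alpha>_def \<beta>_def by simp_all
  have "\<alpha> m = \<beta> m"
  proof (cases "m = j \<or> m = k")
    case True
    then show ?thesis using pair by blast
  next
    case False
    have "\<alpha> ` {j, k, m} = \<beta> ` {j, k, m}"
      using psi_square_image[of "{j, k, m}" j k] S jS kS mS jk
      unfolding \<alpha>_def \<beta>_def by (simp add: image_comp distinct_abs_subset)
    then have "\<alpha> m \<in> \<beta> ` {j, k, m}" by blast
    moreover have "\<alpha> m \<noteq> \<alpha> j" "\<alpha> m \<noteq> \<alpha> k"
      using inj_on_psi_psi[OF S jS kS] jS kS mS False unfolding \<alpha>_def inj_on_def by blast+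
    ultimately show ?thesis using pair by auto
  qed
  then show ?thesis unfolding \<alpha>_def \<beta>_def by simp
qed

lemma Psi_square:
  assumes g: "proper_face g" and gj: "g \<subseteq> facet j" and gk: "g \<subseteq> facet k" and jk: "j \<noteq> k"
    and F: "F \<in> Xi g"
  shows "Psi \<omega> \<tau> (psi j k) (Psi \<omega> \<tau> j F) = Psi \<omega> \<tau> (psi k j) (Psi \<omega> \<tau> k F)"
proof -
  obtain S where S: "distinct_abs S" "S \<noteq> {}" "g = face S" using g by (rule proper_faceE)
  have jS: "j \<in> S" and kS: "k \<in> S" using gj gk S face_subset_facet_iff by blast+
  obtain m where m: "F = facet m" "m \<in> S" using F S Xi_face by blast
  have mC: "m \<in> companions j" "m \<in> companions k"
    using distinct_abs_subset_companions[OF S(1)] jS kS m(2) by blast+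
  have "psi j m \<in> companions (psi j k)"
    using distinct_abs_subset_companions[OF tau_image_face(2)[OF S(1) jS]] kS m(2) by blast
  moreover have "psi k m \<in> companions (psi k j)"
    using distinct_abs_subset_companions[OF tau_image_face(2)[OF S(1) kS]] jS m(2) by blast
  ultimately show ?thesis
    using m(1) Psi_facet mC psi_square[OF S(1) jS kS jk m(2)] by simp
qed

end

subsection \<open>Compositions as words\<close>

lemma comp_seq_snoc: "comp_seq \<tau> (ks @ [k]) = \<tau> k \<circ> comp_seq \<tau> ks"
  by (induction ks) (auto simp: comp_assoc)

lemma Psi_seq_snoc: "Psi_seq \<omega> \<tau> (ks @ [k]) = Psi \<omega> \<tau> k \<circ> Psi_seq \<omega> \<tau> ks"
  by (induction ks) (auto simp: comp_assoc)

lemma valid_seq_snoc: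
  "valid_seq \<tau> f (ks @ [k]) \<longleftrightarrow> valid_seq \<tau> f ks \<and> comp_seq \<tau> ks ` f \<subseteq> facet k"
  by (induction ks arbitrary: f) (auto simp: image_comp)

locale pairing_face = pairing +
  fixes f :: "(real^'a) set"
  assumes proper_face_f: "proper_face f"
begin

definition end_face :: "'a sidx list \<Rightarrow> (real^'a) set" where
  "end_face ks = comp_seq \<tau> ks ` f"

lemma end_face_snoc: "end_face (ks @ [k]) = \<tau> k ` end_face ks"
  unfolding end_face_def comp_seq_snoc by (simp add: image_comp)

definition admissible :: "'a sidx list \<Rightarrow> bool" where
  "admissible ks \<longleftrightarrow> valid_seq \<tau> f ks \<and> proper_face (end_face ks) \<and>
     bij_betw (Psi_seq \<omega> \<tau> ks) (Xi f) (Xi (end_face ks))"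

lemma admissible_Nil: "admissible []"
  unfolding admissible_def end_face_def using proper_face_f by simp

lemma admissible_snoc:
  assumes adm: "admissible ks" and sub: "end_face ks \<subseteq> facet k"
  shows "admissible (ks @ [k])"
proof -
  have "valid_seq \<tau> f (ks @ [k])"
    using adm sub unfolding admissible_def end_face_def valid_seq_snoc by simp
  moreover have "proper_face (end_face (ks @ [k]))"
    using adm sub tau_face_preserving unfolding admissible_def end_face_snoc by blast
  moreover have "bij_betw (Psi \<omega> \<tau> k \<circ> Psi_seq \<omega> \<tau> ks) (Xi f) (Xi (\<tau> k ` end_face ks))"
    using adm sub Psi_bij_Xi bij_betw_trans unfolding admissible_def by blast
  ultimately show ?thesis unfolding admissible_def end_face_snoc Psi_seq_snoc by simp
qed

lemma Psi_seq_in_Xi: "admissible ks \<Longrightarrow> a \<in> Xi f \<Longrightarrow> Psi_seq \<omega> \<tau> ks a \<in> Xi (end_face ks)"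
  unfolding admissible_def bij_betw_def by blast

text \<open>push a ks extends ks by crossing the facet of its end face that corresponds (under the
  transport of facets along ks) to the facet a through f.\<close>
definition push :: "(real^'a) set \<Rightarrow> 'a sidx list \<Rightarrow> 'a sidx list" where
  "push a ks = ks @ [inv facet (Psi_seq \<omega> \<tau> ks a)]"

lemma pushE:
  assumes "admissible ks" "a \<in> Xi f"
  obtains m where "Psi_seq \<omega> \<tau> ks a = facet m" "end_face ks \<subseteq> facet m" "push a ks = ks @ [m]"
proof -
  obtain m where m: "Psi_seq \<omega> \<tau> ks a = facet m" "end_face ks \<subseteq> facet m"
    using Psi_seq_in_Xi[OF assms] unfolding Xi_def by blast
  then have "push a ks = ks @ [m]" unfolding push_def by (simp add: inv_f_f[OF inj_facet])
  with m that show ?thesis by blast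
qed

lemma admissible_push: "admissible ks \<Longrightarrow> a \<in> Xi f \<Longrightarrow> admissible (push a ks)"
  by (metis pushE admissible_snoc)

text \<open>Two admissible words have the same action if they agree on the points of f and on
  the facets through f; this is the relation that strongness asks for.\<close>
definition same_action :: "'a sidx list \<Rightarrow> 'a sidx list \<Rightarrow> bool" where
  "same_action ks ks' \<longleftrightarrow> admissible ks \<and> admissible ks' \<and>
     (\<forall>p\<in>f. comp_seq \<tau> ks p = comp_seq \<tau> ks' p) \<and>
     (\<forall>F\<in>Xi f. Psi_seq \<omega> \<tau> ks F = Psi_seq \<omega> \<tau> ks' F)"

lemma same_action_refl: "admissible ks \<Longrightarrow> same_action ks ks"
  unfolding same_action_def by simp

lemma same_action_sym: "same_action ks ks' \<Longrightarrow> same_action ks' ks"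
  unfolding same_action_def by simp

lemma same_action_trans: "same_action ks ks' \<Longrightarrow> same_action ks' ks'' \<Longrightarrow> same_action ks ks''"
  unfolding same_action_def by simp

lemma same_action_end_face: "same_action ks ks' \<Longrightarrow> end_face ks = end_face ks'"
  unfolding same_action_def end_face_def by (auto intro: image_cong)

lemma same_action_push:
  assumes same: "same_action ks ks'" and a: "a \<in> Xi f"
  shows "same_action (push a ks) (push a ks')"
proof -
  have "Psi_seq \<omega> \<tau> ks a = Psi_seq \<omega> \<tau> ks' a" using same a unfolding same_action_def by blast
  moreover have "admissible (push a ks)" "admissible (push a ks')"
    using same a admissible_push unfolding same_action_def by auto
  ultimately show ?thesis
    using same unfolding same_action_def push_def by (simp add: comp_seq_snoc Psi_seq_snoc)
qed

text \<open>Crossing the same facet of f twice in a row cancels (tau_{\<omega> k} inverts tau_k).\<close>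
lemma push_push_cancel:
  assumes adm: "admissible ks" and a: "a \<in> Xi f"
  shows "same_action (push a (push a ks)) ks"
proof -
  obtain m where m: "Psi_seq \<omega> \<tau> ks a = facet m" "end_face ks \<subseteq> facet m" "push a ks = ks @ [m]"
    using pushE[OF adm a] .
  have "Psi_seq \<omega> \<tau> (ks @ [m]) a = facet (\<omega> m)" using m(1) by (simp add: Psi_seq_snoc Psi_def)
  then have word: "push a (push a ks) = ks @ [m, \<omega> m]"
    using m(3) by (simp add: push_def inv_f_f[OF inj_facet])
  have points: "comp_seq \<tau> (ks @ [m, \<omega> m]) p = comp_seq \<tau> ks p" if "p \<in> f" for p
  proof -
    have "comp_seq \<tau> ks p \<in> facet m" using m(2) that unfolding end_face_def by blast
    then show ?thesis using comp_seq_snoc[of \<tau> "ks @ [m]"] by (simp add: comp_seq_snoc tau_inverse)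
  qed
  have facets: "Psi_seq \<omega> \<tau> (ks @ [m, \<omega> m]) F = Psi_seq \<omega> \<tau> ks F" if "F \<in> Xi f" for F
  proof -
    have "Psi \<omega> \<tau> (\<omega> m) (Psi \<omega> \<tau> m (Psi_seq \<omega> \<tau> ks F)) = Psi_seq \<omega> \<tau> ks F"
      using adm m(2) Psi_seq_in_Xi[OF adm that] Psi_cancel unfolding admissible_def by blast
    then show ?thesis using Psi_seq_snoc[of \<omega> \<tau> "ks @ [m]"] by (simp add: Psi_seq_snoc)
  qed
  show ?thesis
    unfolding same_action_def word
    using admissible_push[OF admissible_push[OF adm a] a] word adm points facets by simp
qed

text \<open>Crossings of two distinct facets of f commute (the compatibility square).\<close>
lemma push_push_swap:
  assumes adm: "admissible ks" and a: "a \<in> Xi f" and b: "b \<in> Xi f" and ab: "a \<noteq> b"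
  shows "same_action (push b (push a ks)) (push a (push b ks))"
proof -
  obtain j where j: "Psi_seq \<omega> \<tau> ks a = facet j" "end_face ks \<subseteq> facet j" "push a ks = ks @ [j]"
    using pushE[OF adm a] .
  obtain k where k: "Psi_seq \<omega> \<tau> ks b = facet k" "end_face ks \<subseteq> facet k" "push b ks = ks @ [k]"
    using pushE[OF adm b] .
  have g: "proper_face (end_face ks)" using adm unfolding admissible_def by blast
  have jk: "j \<noteq> k"
    using adm a b ab j(1) k(1) unfolding admissible_def bij_betw_def inj_on_def by metis
  have fjk: "fst j \<noteq> fst k" by (rule facets_through_face_fst[OF g j(2) k(2) jk])
  then have kj: "k \<in> companions j" "j \<in> companions k" unfolding companions_def by auto
  have "Psi_seq \<omega> \<tau> (ks @ [j]) b = facet (psi j k)" using k(1) Psi_facet[OF kj(1)] by (simp add: Psi_seq_snoc)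
  then have word1: "push b (push a ks) = ks @ [j, psi j k]"
    using j(3) by (simp add: push_def inv_f_f[OF inj_facet])
  have "Psi_seq \<omega> \<tau> (ks @ [k]) a = facet (psi k j)" using j(1) Psi_facet[OF kj(2)] by (simp add: Psi_seq_snoc)
  then have word2: "push a (push b ks) = ks @ [k, psi k j]"
    using k(3) by (simp add: push_def inv_f_f[OF inj_facet])
  have snoc2: "comp_seq \<tau> (ks @ [x, y]) = \<tau> y \<circ> \<tau> x \<circ> comp_seq \<tau> ks"
    "Psi_seq \<omega> \<tau> (ks @ [x, y]) = Psi \<omega> \<tau> y \<circ> Psi \<omega> \<tau> x \<circ> Psi_seq \<omega> \<tau> ks" for x y
    using comp_seq_snoc[of \<tau> "ks @ [x]"] Psi_seq_snoc[of \<omega> \<tau> "ks @ [x]"]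
    by (simp_all add: comp_seq_snoc Psi_seq_snoc comp_assoc)
  have points: "comp_seq \<tau> (ks @ [j, psi j k]) p = comp_seq \<tau> (ks @ [k, psi k j]) p" if "p \<in> f" for p
    using tau_square[OF fjk] j(2) k(2) that unfolding snoc2 end_face_def by auto
  have facets: "Psi_seq \<omega> \<tau> (ks @ [j, psi j k]) F = Psi_seq \<omega> \<tau> (ks @ [k, psi k j]) F"
    if "F \<in> Xi f" for F
    using Psi_square[OF g j(2) k(2) jk Psi_seq_in_Xi[OF adm that]] unfolding snoc2 by simp
  show ?thesis
    unfolding same_action_def word1 word2
    using admissible_push[OF admissible_push[OF adm a] b] admissible_push[OF admissible_push[OF adm b] a]
      word1 word2 points facets by simp
qed

lemma admissible_fold: "admissible ks \<Longrightarrow> set L \<subseteq> Xi f \<Longrightarrow> admissible (fold push L ks)"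
  by (induction L arbitrary: ks) (auto intro: admissible_push)

lemma same_action_fold:
  "same_action ks ks' \<Longrightarrow> set L \<subseteq> Xi f \<Longrightarrow> same_action (fold push L ks) (fold push L ks')"
  by (induction L arbitrary: ks ks') (auto intro: same_action_push)

lemma push_last_first:
  "admissible ks \<Longrightarrow> set M \<subseteq> Xi f \<Longrightarrow> a \<in> Xi f \<Longrightarrow> a \<notin> set M \<Longrightarrow>
   same_action (fold push (M @ [a]) ks) (fold push (a # M) ks)"
proof (induction M arbitrary: ks)
  case Nil
  then show ?case by (simp add: same_action_refl admissible_push)
next
  case (Cons b M)
  have b: "b \<in> Xi f" "set M \<subseteq> Xi f" "b \<noteq> a" "a \<notin> set M" using Cons.prems by auto
  have "same_action (fold push (M @ [a]) (push b ks)) (fold push (a # M) (push b ks))"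
    by (rule Cons.IH[OF admissible_push[OF Cons.prems(1) b(1)] b(2) Cons.prems(3) b(4)])
  moreover have "same_action (fold push M (push a (push b ks))) (fold push M (push b (push a ks)))"
    by (rule same_action_fold[OF push_push_swap[OF Cons.prems(1) b(1) Cons.prems(3) b(3)] b(2)])
  ultimately show ?case by (auto intro: same_action_trans)
qed

lemma finite_Xi: "finite (Xi f)"
  by (rule finite_subset[of _ "range facet"]) (auto simp: Xi_def)

lemma card_Xi: "card (Xi f) = codim f"
proof -
  obtain S where S: "distinct_abs S" "S \<noteq> {}" "f = face S" using proper_face_f by (rule proper_faceE)
  have "card (Xi f) = card (facet ` S)" using S(3) Xi_face[OF S(1)] by simp
  also have "\<dots> = card S" by (rule card_image[OF inj_on_subset[OF inj_facet subset_UNIV]])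
  finally show ?thesis using S(3) codim_face[OF S(1)] by simp
qed

definition facet_list :: "(real^'a) set list" where
  "facet_list = (SOME l. set l = Xi f \<and> distinct l)"

lemma facet_list: "distinct facet_list" "set facet_list = Xi f"
  using someI_ex[OF finite_distinct_list[OF finite_Xi]] unfolding facet_list_def by auto

definition canonical :: "(real^'a) set set \<Rightarrow> 'a sidx list" where
  "canonical P = fold push (filter (\<lambda>x. x \<in> P) facet_list) []"

lemma push_canonical:
  assumes a: "a \<in> Xi f"
  shows "same_action (push a (canonical P)) (canonical (if a \<in> P then P - {a} else insert a P))"
    (is "same_action _ (canonical ?Q)")
proof -
  obtain A1 A2 where A: "facet_list = A1 @ a # A2" using a facet_list(2) split_list by metis
  have na: "a \<notin> set A1" "a \<notin> set A2" using facet_list(1) A by auto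
  define L where "L = filter (\<lambda>x. x \<in> P) A1"
  define M where "M = filter (\<lambda>x. x \<in> P) A2"
  have QL: "filter (\<lambda>x. x \<in> ?Q) A1 = L" unfolding L_def using na(1) by (intro filter_cong) auto
  have QM: "filter (\<lambda>x. x \<in> ?Q) A2 = M" unfolding M_def using na(2) by (intro filter_cong) auto
  have sub: "set A1 \<subseteq> Xi f" "set A2 \<subseteq> Xi f" using facet_list(2) A by auto
  then have M: "set M \<subseteq> Xi f" "a \<notin> set M" using na unfolding M_def by auto
  have adm_L: "admissible (fold push L [])"
    using sub(1) unfolding L_def by (intro admissible_fold[OF admissible_Nil]) auto
  show ?thesis
  proof (cases "a \<in> P")
    case True
    have "push a (canonical P) = fold push (M @ [a]) (push a (fold push L []))"
      using True unfolding canonical_def A L_def M_def by simp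
    moreover have "same_action (fold push (M @ [a]) (push a (fold push L [])))
                               (fold push M (push a (push a (fold push L []))))"
      using push_last_first[OF admissible_push[OF adm_L a] M(1) a M(2)] by simp
    moreover have "same_action (fold push M (push a (push a (fold push L [])))) (fold push M (fold push L []))"
      by (rule same_action_fold[OF push_push_cancel[OF adm_L a] M(1)])
    moreover have "fold push M (fold push L []) = canonical ?Q"
      using True QL QM unfolding canonical_def A by simp
    ultimately show ?thesis by (metis same_action_trans)
  next
    case False
    have "push a (canonical P) = fold push (M @ [a]) (fold push L [])"
      using False unfolding canonical_def A L_def M_def by simp
    moreover have "fold push (a # M) (fold push L []) = canonical ?Q"
      using False QL QM unfolding canonical_def A by simp
    ultimately show ?thesis using push_last_first[OF adm_L M(1) a M(2)] by simp
  qed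
qed

lemma normal_form: "valid_seq \<tau> f ks \<Longrightarrow> \<exists>P \<subseteq> Xi f. same_action ks (canonical P)"
proof (induction ks rule: rev_induct)
  case Nil
  have "canonical {} = []" unfolding canonical_def by simp
  then have "same_action [] (canonical {})" using same_action_refl[OF admissible_Nil] by simp
  then show ?case by blast
next
  case (snoc k ks)
  have valid: "valid_seq \<tau> f ks" and sub: "end_face ks \<subseteq> facet k"
    using snoc.prems unfolding valid_seq_snoc end_face_def by auto
  obtain P where P: "P \<subseteq> Xi f" "same_action ks (canonical P)" using snoc.IH[OF valid] by blast
  then have adm: "admissible ks" unfolding same_action_def by blast
  have "facet k \<in> Xi (end_face ks)" using sub unfolding Xi_def by blast
  then have "facet k \<in> Psi_seq \<omega> \<tau> ks ` Xi f"
    using adm unfolding admissible_def bij_betw_def by simp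
  then obtain a where a: "a \<in> Xi f" "Psi_seq \<omega> \<tau> ks a = facet k" by (rule imageE) simp
  have "push a ks = ks @ [k]" unfolding push_def using a(2) by (simp add: inv_f_f[OF inj_facet])
  then have "same_action (ks @ [k]) (push a (canonical P))"
    using same_action_push[OF P(2) a(1)] by simp
  then have "same_action (ks @ [k]) (canonical (if a \<in> P then P - {a} else insert a P))"
    using same_action_trans push_canonical[OF a(1)] by blast
  moreover have "(if a \<in> P then P - {a} else insert a P) \<subseteq> Xi f" using P(1) a(1) by auto
  ultimately show ?case by blast
qed

lemma face_family_canonical:
  "face_family \<tau> f = (\<lambda>P. end_face (canonical P)) ` Pow (Xi f)"
proof
  show "face_family \<tau> f \<subseteq> (\<lambda>P. end_face (canonical P)) ` Pow (Xi f)"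
  proof
    fix g assume "g \<in> face_family \<tau> f"
    then obtain ks where ks: "g = end_face ks" "valid_seq \<tau> f ks"
      unfolding face_family_def end_face_def by blast
    then obtain P where P: "P \<subseteq> Xi f" "same_action ks (canonical P)" using normal_form by blast
    then have "g = end_face (canonical P)" using ks(1) same_action_end_face by simp
    then show "g \<in> (\<lambda>P. end_face (canonical P)) ` Pow (Xi f)" using P(1) by blast
  qed
next
  show "(\<lambda>P. end_face (canonical P)) ` Pow (Xi f) \<subseteq> face_family \<tau> f"
  proof
    fix g assume "g \<in> (\<lambda>P. end_face (canonical P)) ` Pow (Xi f)"
    then obtain P where g: "g = end_face (canonical P)" by blast
    have "admissible (canonical P)"
      unfolding canonical_def using facet_list(2) by (intro admissible_fold[OF admissible_Nil]) auto
    then show "g \<in> face_family \<tau> f"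
      unfolding g face_family_def end_face_def admissible_def by blast
  qed
qed

text \<open>If f is as perfect as possible, the canonical end faces are pairwise distinct, so two
  valid words with the same end face have the same action.\<close>
lemma same_action_if_same_end_face:
  assumes perfect_f: "card (face_family \<tau> f) = 2 ^ codim f"
    and valid: "valid_seq \<tau> f ks" "valid_seq \<tau> f ks'"
    and same_end: "end_face ks = end_face ks'"
  shows "same_action ks ks'"
proof -
  have "card ((\<lambda>P. end_face (canonical P)) ` Pow (Xi f)) = card (Pow (Xi f))"
    using perfect_f face_family_canonical card_Pow[OF finite_Xi] card_Xi by simp
  then have inj: "inj_on (\<lambda>P. end_face (canonical P)) (Pow (Xi f))"
    using eq_card_imp_inj_on finite_Xi by blast
  obtain P where P: "P \<subseteq> Xi f" "same_action ks (canonical P)" using normal_form[OF valid(1)] by blast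
  obtain P' where P': "P' \<subseteq> Xi f" "same_action ks' (canonical P')" using normal_form[OF valid(2)] by blast
  have "end_face (canonical P) = end_face (canonical P')"
    using same_action_end_face[OF P(2)] same_action_end_face[OF P'(2)] same_end by simp
  then have "P = P'" using inj P(1) P'(1) unfolding inj_on_def by blast
  then show ?thesis using P(2) P'(2) same_action_trans same_action_sym by blast
qed

end

lemma (in pairing) perfect_imp_strong:
  assumes "perfect \<tau>" shows "strong \<omega> \<tau>"
  unfolding strong_def
proof (intro allI impI)
  fix f ks ks'
  assume f: "proper_face f \<and> valid_seq \<tau> f ks \<and> valid_seq \<tau> f ks' \<and>
             comp_seq \<tau> ks ` f = comp_seq \<tau> ks' ` f"
  interpret pairing_face \<omega> \<tau> f using f by unfold_locales blast
  have "same_action ks ks'"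
    using same_action_if_same_end_face assms f unfolding perfect_def end_face_def by blast
  then show "(\<forall>p\<in>f. comp_seq \<tau> ks p = comp_seq \<tau> ks' p) \<and>
             (\<forall>F\<in>Xi f. Psi_seq \<omega> \<tau> ks F = Psi_seq \<omega> \<tau> ks' F)"
    unfolding same_action_def by blast
qed

theorem mainTheorem4:
  fixes \<omega> :: "'n::finite sidx \<Rightarrow> 'n sidx"
    and \<tau> :: "'n sidx \<Rightarrow> real^'n \<Rightarrow> real^'n"
  assumes "regular_fp \<omega> \<tau>"
    and "perfect \<tau>"
  shows "strong \<omega> \<tau>"
proof -
  interpret pairing \<omega> \<tau> using assms(1) unfolding regular_fp_def by unfold_locales blast
  show ?thesis using assms(2) by (rule perfect_imp_strong)
qed

end
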